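(* Let $F\in\Gamma_0(\mathbb{R}_+)$ have a strict minimum at $s=1$ (i.e. $F(s)>0$ for $s\neq1$), let $X$ be a set and $c:X\times X\to[0,+\infty]$ be symmetric with $c(x_1,x_2)=0$ if and only if $x_1=x_2$. Then the induced marginal perspective cost $H(x_1,r_1;x_2,r_2):=H_{c(x_1,x_2)}(r_1,r_2)$ is non-negative, symmetric ($H(x_1,r_1;x_2,r_2)=H(x_2,r_2;x_1,r_1)$), and $H(x_1,r_1;x_2,r_2)=0$ if and only if either $r_1=r_2=0$, or $r_1=r_2$ and $x_1=x_2$.
   Context: $\Gamma_0(\mathbb{R}_+)$ is the set of functions $F:[0,\infty)\to[0,\infty]$ that are convex, lower semicontinuous, with $F(1)=0$. For $F\in\Gamma_0(\mathbb{R}_+)$: $\mathrm{rec}(F)(r)=\lim_{\alpha\to\infty}F(1+\alpha r)/\alpha$, $F'_\infty:=\mathrm{rec}(F)(1)$; the perspective function is $\hat F(r,t)=tF(r/t)$ for $t>0$, $\hat F(r,0)=\mathrm{rec}(F)(r)$. For $c\in[0,\infty)$ the marginal perspective function $H_c:[0,\infty)^2\to[0,\infty]$ is the lower semicontinuous envelope of $\tilde H_c(r_1,r_2)=\inf_{\theta>0}\big[\hat F(\theta,r_1)+\hat F(\theta,r_2)+\theta c\big]$ (for $r_1,r_2>0$ this equals $\inf_{\theta>0}[r_1F(\theta/r_1)+r_2F(\theta/r_2)+\theta c]$), and for $c=+\infty$, $H_\infty(r_1,r_2)=F(0)(r_1+r_2)$. *)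

theory Defs
  imports "HOL-Analysis.Analysis"
begin

text \<open>Functions F : [0,\<infinity>) \<rightarrow> [0,\<infinity>] are modelled as real \<Rightarrow> ereal; only
  values on {0..} matter.\<close>

definition convex_on_nonneg :: "(real \<Rightarrow> ereal) \<Rightarrow> bool" where
  "convex_on_nonneg F \<longleftrightarrow>
     (\<forall>x\<ge>0. \<forall>y\<ge>0. \<forall>u\<in>{0..1}.
        F ((1 - u) * x + u * y) \<le> ereal (1 - u) * F x + ereal u * F y)"

definition lsc_nonneg :: "(real \<Rightarrow> ereal) \<Rightarrow> bool" where
  "lsc_nonneg F \<longleftrightarrow> (\<forall>x\<ge>0. F x \<le> Liminf (at x within {0..}) F)"

definition Gamma0 :: "(real \<Rightarrow> ereal) \<Rightarrow> bool" where
  "Gamma0 F \<longleftrightarrow> (\<forall>x\<ge>0. F x \<ge> 0) \<and> convex_on_nonneg F \<and> lsc_nonneg F \<and> F 1 = 0"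

definition recF :: "(real \<Rightarrow> ereal) \<Rightarrow> real \<Rightarrow> ereal" where
  "recF F r = Lim at_top (\<lambda>\<alpha>::real. F (1 + \<alpha> * r) / ereal \<alpha>)"

definition persp :: "(real \<Rightarrow> ereal) \<Rightarrow> real \<Rightarrow> real \<Rightarrow> ereal" where
  "persp F r t = (if t > 0 then ereal t * F (r / t) else recF F r)"

definition Htilde :: "(real \<Rightarrow> ereal) \<Rightarrow> real \<Rightarrow> real \<Rightarrow> real \<Rightarrow> ereal" where
  "Htilde F c r1 r2 =
     (INF \<theta>\<in>{0<..}. persp F \<theta> r1 + persp F \<theta> r2 + ereal (\<theta> * c))"

definition quadrant :: "(real \<times> real) set" where
  "quadrant = {0..} \<times> {0..}"

definition lsc_on_set :: "('a::topological_space) set \<Rightarrow> ('a \<Rightarrow> ereal) \<Rightarrow> bool" where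
  "lsc_on_set D g \<longleftrightarrow> (\<forall>p\<in>D. g p \<le> Liminf (at p within D) g)"

definition lsc_envelope :: "('a::topological_space) set \<Rightarrow> ('a \<Rightarrow> ereal) \<Rightarrow> 'a \<Rightarrow> ereal" where
  "lsc_envelope D f p = (SUP g\<in>{g. lsc_on_set D g \<and> (\<forall>q\<in>D. g q \<le> f q)}. g p)"

definition margpersp :: "(real \<Rightarrow> ereal) \<Rightarrow> ereal \<Rightarrow> real \<Rightarrow> real \<Rightarrow> ereal" where
  "margpersp F c r1 r2 =
     (if c = \<infinity> then F 0 * ereal (r1 + r2)
      else lsc_envelope quadrant (\<lambda>(a, b). Htilde F (real_of_ereal c) a b) (r1, r2))"

definition mpcost :: "(real \<Rightarrow> ereal) \<Rightarrow> ('a \<Rightarrow> 'a \<Rightarrow> ereal) \<Rightarrow> 'a \<Rightarrow> real \<Rightarrow> 'a \<Rightarrow> real \<Rightarrow> ereal" where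
  "mpcost F c x1 r1 x2 r2 = margpersp F (c x1 x2) r1 r2"

end

theory Submission
  imports Defs
begin

text \<open>Nonnegativity and symmetry pass from \<open>Htilde\<close> to its lower semicontinuous envelope.
  Taking \<open>\<theta> = r\<close> gives \<open>Htilde F c r r \<le> r c\<close>, so the envelope is at most \<open>r c\<close> on the
  diagonal; this yields the zeros at the origin and, for \<open>c = 0\<close>, on the whole diagonal.
  Conversely, if \<open>F s0 \<ge> k > 0\<close> with \<open>s0 \<noteq> 1\<close>, convexity and \<open>F 1 = 0\<close> put the line
  \<open>k (s - s0) / (s0 - 1)\<close> below \<open>F\<close>, hence \<open>k (\<theta> - s0 a) / (s0 - 1)\<close> below the
  perspective. Splitting the infimum over \<open>\<theta>\<close> at a level between \<open>s1 r1\<close> and \<open>s2 r2\<close>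
  (with \<open>s1 > 1 > s2\<close>) produces a continuous minorant of \<open>Htilde\<close> that is positive at every
  other point, and a continuous minorant bounds the envelope from below.\<close>

lemma Gamma0_nonneg: "Gamma0 F \<Longrightarrow> 0 \<le> x \<Longrightarrow> 0 \<le> F x"
  unfolding Gamma0_def by auto

lemma Gamma0_one: "Gamma0 F \<Longrightarrow> F 1 = 0"
  unfolding Gamma0_def by auto

lemma Gamma0_convex:
  "Gamma0 F \<Longrightarrow> 0 \<le> x \<Longrightarrow> 0 \<le> y \<Longrightarrow> 0 \<le> u \<Longrightarrow> u \<le> 1 \<Longrightarrow>
    F ((1 - u) * x + u * y) \<le> ereal (1 - u) * F x + ereal u * F y"
  unfolding Gamma0_def convex_on_nonneg_def by auto

lemma Gamma0_secant_bound:
  assumes G: "Gamma0 F" and s: "0 \<le> s" and s0: "s0 \<noteq> 1" "0 \<le> (s - s0) * (s0 - 1)"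
    and k: "ereal k \<le> F s0"
  shows "ereal (k * (s - 1) / (s0 - 1)) \<le> F s"
proof -
  define u where "u = (s0 - 1) / (s - 1)"
  have s_ne_1: "s \<noteq> 1" using s0 by (auto simp: zero_le_mult_iff)
  have u: "0 < u" "u \<le> 1"
    using s0 s_ne_1 unfolding u_def
    by (auto simp: divide_simps zero_le_mult_iff mult_le_0_iff split: if_splits)
  have "(1 - u) * 1 + u * s = s0"
    using s_ne_1 by (simp add: u_def divide_simps) (simp add: algebra_simps)
  then have "F s0 = F ((1 - u) * 1 + u * s)" by simp
  also have "\<dots> \<le> ereal u * F s"
    using Gamma0_convex[OF G _ s, of 1 u] u Gamma0_one[OF G] by simp
  finally have le: "ereal k \<le> ereal u * F s" using k by simp
  show ?thesis
  proof (cases "F s")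
    case (real y)
    with le u have "k / u \<le> y" by (simp add: field_simps)
    then show ?thesis using real s_ne_1 by (simp add: u_def)
  qed (use Gamma0_nonneg[OF G s] in auto)
qed

lemma Gamma0_affine_minorant:
  assumes G: "Gamma0 F" and s: "0 \<le> s" and s0: "s0 \<noteq> 1"
    and k: "0 \<le> k" "ereal k \<le> F s0"
  shows "ereal (k * (s - s0) / (s0 - 1)) \<le> F s"
proof (cases "0 \<le> (s - s0) * (s0 - 1)")
  case True
  have "k * (s - s0) / (s0 - 1) = k * (s - 1) / (s0 - 1) - k"
    using s0 by (simp add: field_simps)
  then have "ereal (k * (s - s0) / (s0 - 1)) \<le> ereal (k * (s - 1) / (s0 - 1))"
    using k by simp
  also have "\<dots> \<le> F s" by (rule Gamma0_secant_bound[OF G s s0 True k(2)])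
  finally show ?thesis .
next
  case False
  then have "(s - s0) / (s0 - 1) \<le> 0"
    by (auto simp: divide_le_0_iff zero_le_mult_iff)
  then have "k * ((s - s0) / (s0 - 1)) \<le> 0" by (rule mult_nonneg_nonpos[OF k(1)])
  then have "ereal (k * (s - s0) / (s0 - 1)) \<le> 0" by simp
  also have "0 \<le> F s" by (rule Gamma0_nonneg[OF G s])
  finally show ?thesis .
qed

lemma Gamma0_difference_quotient_mono:
  assumes G: "Gamma0 F" and t: "0 \<le> t" and ab: "0 < a" "a \<le> b"
  shows "F (1 + a * t) / ereal a \<le> F (1 + b * t) / ereal b"
proof -
  define u where "u = a / b"
  have u: "0 \<le> u" "u \<le> 1" using ab by (auto simp: u_def field_simps)
  have e: "(1 - u) * 1 + u * (1 + b * t) = 1 + a * t" using ab by (simp add: u_def field_simps)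
  have "F (1 + a * t) \<le> ereal (1 - u) * F 1 + ereal u * F (1 + b * t)"
    using Gamma0_convex[OF G _ _ u, of 1 "1 + b * t"] t ab unfolding e by simp
  then have le: "F (1 + a * t) \<le> ereal u * F (1 + b * t)" using Gamma0_one[OF G] by simp
  have nonneg: "0 \<le> F (1 + a * t)" "0 \<le> F (1 + b * t)"
    using Gamma0_nonneg[OF G] t ab by auto
  show ?thesis
  proof (cases "F (1 + b * t)")
    case (real y)
    then obtain z where z: "F (1 + a * t) = ereal z"
      using le nonneg by (cases "F (1 + a * t)") auto
    have "z \<le> u * y" using le z real by simp
    then have "z / a \<le> y / b" using ab by (simp add: u_def field_simps)
    then show ?thesis using z real ab by simp
  qed (use nonneg ab in \<open>auto simp: ereal_divide_eq\<close>)
qed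

lemma recF_eq_SUP:
  assumes G: "Gamma0 F" and t: "0 \<le> t"
  shows "recF F t = (SUP \<alpha>\<in>{0<..}. F (1 + \<alpha> * t) / ereal \<alpha>)"
proof -
  let ?q = "\<lambda>\<alpha>. F (1 + \<alpha> * t) / ereal \<alpha>"
  have "(?q \<longlongrightarrow> (SUP \<alpha>\<in>{0<..}. ?q \<alpha>)) at_top"
  proof (rule increasing_tendsto)
    show "\<forall>\<^sub>F \<alpha> in at_top. ?q \<alpha> \<le> (SUP \<alpha>\<in>{0<..}. ?q \<alpha>)"
      using eventually_gt_at_top[of 0] by eventually_elim (auto intro: SUP_upper)
  next
    fix y assume "y < (SUP \<alpha>\<in>{0<..}. ?q \<alpha>)"
    then obtain a where a: "0 < a" "y < ?q a" by (auto simp: less_SUP_iff)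
    show "\<forall>\<^sub>F \<alpha> in at_top. y < ?q \<alpha>"
      using eventually_ge_at_top[of a]
    proof eventually_elim
      case (elim \<alpha>)
      then show ?case using Gamma0_difference_quotient_mono[OF G t a(1) elim] a by order
    qed
  qed
  then show ?thesis unfolding recF_def by (intro tendsto_Lim) auto
qed

lemma recF_ge_difference_quotient:
  "Gamma0 F \<Longrightarrow> 0 \<le> t \<Longrightarrow> 0 < \<alpha> \<Longrightarrow> F (1 + \<alpha> * t) / ereal \<alpha> \<le> recF F t"
  by (subst recF_eq_SUP) (auto intro: SUP_upper)

lemma persp_nonneg:
  assumes G: "Gamma0 F" and "0 < \<theta>" "0 \<le> a"
  shows "0 \<le> persp F \<theta> a"
proof (cases "0 < a")
  case True
  then show ?thesis using Gamma0_nonneg[OF G, of "\<theta> / a"] assms by (simp add: persp_def)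
next
  case False
  have "0 \<le> F (1 + 1 * \<theta>) / ereal 1" using Gamma0_nonneg[OF G, of "1 + \<theta>"] assms by simp
  also have "\<dots> \<le> recF F \<theta>" using assms by (intro recF_ge_difference_quotient[OF G]) auto
  finally show ?thesis using False by (simp add: persp_def)
qed

lemma persp_affine_minorant:
  assumes G: "Gamma0 F" and s0: "0 \<le> s0" "s0 \<noteq> 1" and k: "0 < k" "ereal k \<le> F s0"
    and \<theta>: "0 < \<theta>" and a: "0 \<le> a"
  shows "ereal (k * (\<theta> - s0 * a) / (s0 - 1)) \<le> persp F \<theta> a"
proof (cases "0 < a")
  case True
  have "ereal (k * (\<theta> - s0 * a) / (s0 - 1)) = ereal a * ereal (k * (\<theta> / a - s0) / (s0 - 1))"
    using True s0(2) by (simp add: field_simps)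
  also have "\<dots> \<le> ereal a * F (\<theta> / a)"
    using Gamma0_affine_minorant[OF G _ s0(2)] k \<theta> True
    by (intro ereal_mult_left_mono) auto
  also have "\<dots> = persp F \<theta> a" using True by (simp add: persp_def)
  finally show ?thesis .
next
  case False
  then have a0: "a = 0" using a by simp
  show ?thesis
  proof (cases "s0 < 1")
    case True
    then have "ereal (k * (\<theta> - s0 * a) / (s0 - 1)) \<le> 0"
      using k \<theta> a0 by (simp add: divide_nonneg_neg)
    also have "0 \<le> persp F \<theta> a" by (rule persp_nonneg[OF G \<theta> a])
    finally show ?thesis .
  next
    case False
    \<comment> \<open>Choose the step \<open>\<alpha>\<close> of the recession quotient so that \<open>1 + \<alpha> \<theta>\<close> lands exactly on \<open>s0\<close>.\<close>
    define \<alpha> where "\<alpha> = (s0 - 1) / \<theta>"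
    have \<alpha>: "0 < \<alpha>" "1 + \<alpha> * \<theta> = s0" using False s0 \<theta> by (auto simp: \<alpha>_def)
    have "ereal (k * (\<theta> - s0 * a) / (s0 - 1)) = ereal k / ereal \<alpha>"
      using a0 \<theta> s0(2) by (simp add: \<alpha>_def)
    also have "\<dots> \<le> F s0 / ereal \<alpha>"
      using k \<alpha> by (intro ereal_divide_right_mono) auto
    also have "\<dots> \<le> recF F \<theta>"
      using recF_ge_difference_quotient[OF G _ \<alpha>(1)] \<theta> \<alpha>(2) by fastforce
    finally show ?thesis using a0 by (simp add: persp_def)
  qed
qed

lemma Htilde_nonneg:
  assumes G: "Gamma0 F" and "0 \<le> a" "0 \<le> b" "0 \<le> c"
  shows "0 \<le> Htilde F c a b"
  unfolding Htilde_def
  using persp_nonneg[OF G] assms by (auto intro!: INF_greatest add_nonneg_nonneg)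

lemma Htilde_commute: "Htilde F c a b = Htilde F c b a"
  unfolding Htilde_def by (simp add: add_ac)

lemma Htilde_diagonal_le:
  assumes G: "Gamma0 F" and r: "0 < r"
  shows "Htilde F c r r \<le> ereal (r * c)"
proof -
  have "Htilde F c r r \<le> persp F r r + persp F r r + ereal (r * c)"
    unfolding Htilde_def using r by (intro INF_lower) auto
  also have "persp F r r = 0" using r Gamma0_one[OF G] by (simp add: persp_def)
  finally show ?thesis by simp
qed

lemma Htilde_lower_bound:
  assumes G: "Gamma0 F" and s1: "1 < s1" and s2: "0 \<le> s2" "s2 < 1"
    and k1: "0 < k1" "ereal k1 \<le> F s1" and k2: "0 < k2" "ereal k2 \<le> F s2"
    and ab: "0 \<le> a" "0 \<le> b" and c: "0 \<le> c"
  shows "ereal (min (max (M * c) (k1 * (M - s1 * a) / (s1 - 1))) (k2 * (M - s2 * b) / (s2 - 1)))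
           \<le> Htilde F c a b"
  unfolding Htilde_def
proof (rule INF_greatest)
  fix \<theta> :: real assume "\<theta> \<in> {0<..}"
  then have \<theta>: "0 < \<theta>" by simp
  let ?sum = "persp F \<theta> a + persp F \<theta> b + ereal (\<theta> * c)"
  have nonneg: "0 \<le> persp F \<theta> a" "0 \<le> persp F \<theta> b" "0 \<le> ereal (\<theta> * c)"
    using persp_nonneg[OF G \<theta>] ab \<theta> c by auto
  then have le_sum: "persp F \<theta> a \<le> ?sum" "persp F \<theta> b \<le> ?sum" "ereal (\<theta> * c) \<le> ?sum"
    by (simp_all add: add_increasing add_increasing2)
  show "ereal (min (max (M * c) (k1 * (M - s1 * a) / (s1 - 1))) (k2 * (M - s2 * b) / (s2 - 1)))
          \<le> ?sum"
  proof (cases "M \<le> \<theta>")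
    case True
    have "ereal (M * c) \<le> ereal (\<theta> * c)" using True c by (simp add: mult_right_mono)
    then have transport: "ereal (M * c) \<le> ?sum" using le_sum(3) by (rule order_trans)
    have "ereal (k1 * (M - s1 * a) / (s1 - 1)) \<le> ereal (k1 * (\<theta> - s1 * a) / (s1 - 1))"
      using True k1(1) s1 by (simp add: divide_right_mono mult_left_mono)
    also have "\<dots> \<le> persp F \<theta> a"
      using persp_affine_minorant[OF G _ _ k1 \<theta> ab(1)] s1 by simp
    also have "\<dots> \<le> ?sum" by (rule le_sum(1))
    finally show ?thesis using transport by (simp add: min.coboundedI1)
  next
    case False
    have "ereal (k2 * (M - s2 * b) / (s2 - 1)) \<le> ereal (k2 * (\<theta> - s2 * b) / (s2 - 1))"
      using False k2(1) s2 by (simp add: divide_right_mono_neg mult_left_mono)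
    also have "\<dots> \<le> persp F \<theta> b"
      using persp_affine_minorant[OF G s2(1) _ k2 \<theta> ab(2)] s2 by simp
    also have "\<dots> \<le> ?sum" by (rule le_sum(2))
    finally show ?thesis by (simp add: min.coboundedI2)
  qed
qed

lemma lsc_on_set_continuous:
  assumes "continuous_on D L"
  shows "lsc_on_set D (\<lambda>q. ereal (L q))"
  unfolding lsc_on_set_def
proof
  fix p assume p: "p \<in> D"
  show "ereal (L p) \<le> Liminf (at p within D) (\<lambda>q. ereal (L q))"
  proof (cases "at p within D = bot")
    case False
    have "(L \<longlongrightarrow> L p) (at p within D)" using assms p by (simp add: continuous_on_def)
    then have "((\<lambda>q. ereal (L q)) \<longlongrightarrow> ereal (L p)) (at p within D)" by (rule tendsto_ereal)
    from lim_imp_Liminf[OF _ this] False show ?thesis by simp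
  qed simp
qed

lemma lsc_envelope_ge_continuous_minorant:
  assumes "continuous_on D L" and "\<And>q. q \<in> D \<Longrightarrow> ereal (L q) \<le> f q"
  shows "ereal (L p) \<le> lsc_envelope D f p"
  unfolding lsc_envelope_def
  using assms lsc_on_set_continuous[OF assms(1)]
  by (intro SUP_upper[where f = "\<lambda>g. g p" and i = "\<lambda>q. ereal (L q)", simplified]) auto

lemma Liminf_filter_antimono:
  fixes f :: "'a \<Rightarrow> 'b::complete_lattice"
  shows "F \<le> G \<Longrightarrow> Liminf G f \<le> Liminf F f"
  unfolding Liminf_def le_filter_def by (rule SUP_subset_mono) auto

lemma lsc_envelope_le_Liminf:
  assumes "p \<in> D"
  shows "lsc_envelope D f p \<le> Liminf (at p within D) f"
  unfolding lsc_envelope_def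
proof (rule SUP_least)
  fix g assume "g \<in> {g. lsc_on_set D g \<and> (\<forall>q\<in>D. g q \<le> f q)}"
  then have lsc: "lsc_on_set D g" and minorant: "\<forall>q\<in>D. g q \<le> f q" by auto
  have "g p \<le> Liminf (at p within D) g" using lsc assms by (simp add: lsc_on_set_def)
  also have "\<dots> \<le> Liminf (at p within D) f"
    using minorant by (intro Liminf_mono) (auto simp: eventually_at_filter)
  finally show "g p \<le> Liminf (at p within D) f" .
qed

lemma lsc_envelope_quadrant_diagonal_le:
  fixes f :: "real \<times> real \<Rightarrow> ereal"
  assumes diag: "\<And>a. 0 < a \<Longrightarrow> f (a, a) \<le> ereal (a * c)" and r: "0 \<le> r"
  shows "lsc_envelope quadrant f (r, r) \<le> ereal (r * c)"
proof -
  have "\<forall>\<^sub>F a in at_right r. (a, a) \<in> quadrant \<and> (a, a) \<noteq> (r, r)"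
    using eventually_at_right_less[of r] by eventually_elim (use r in \<open>auto simp: quadrant_def\<close>)
  moreover have "((\<lambda>a. (a, a)) \<longlongrightarrow> (r, r)) (at_right r)" by (intro tendsto_intros)
  ultimately have "filterlim (\<lambda>a. (a, a)) (at (r, r) within quadrant) (at_right r)"
    by (simp add: filterlim_at)
  then have "filtermap (\<lambda>a. (a, a)) (at_right r) \<le> at (r, r) within quadrant"
    by (simp add: filterlim_def)
  then have "Liminf (at (r, r) within quadrant) f \<le> Liminf (filtermap (\<lambda>a. (a, a)) (at_right r)) f"
    by (rule Liminf_filter_antimono)
  also have "\<dots> \<le> Liminf (at_right r) (\<lambda>a. f (a, a))"
    by (rule Liminf_filtermap_le)
  also have "\<dots> \<le> Liminf (at_right r) (\<lambda>a. ereal (a * c))"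
    using eventually_at_right_less[of r] r diag by (intro Liminf_mono) (auto elim!: eventually_mono)
  also have "\<dots> = ereal (r * c)"
    by (intro lim_imp_Liminf tendsto_intros) simp_all
  finally show ?thesis
    using lsc_envelope_le_Liminf[of "(r, r)" quadrant f] r by (simp add: quadrant_def)
qed

lemma open_image_swap:
  fixes S :: "('a::topological_space \<times> 'b::topological_space) set"
  assumes "open S"
  shows "open (prod.swap ` S)"
proof -
  have "prod.swap ` S = prod.swap -` S" by force
  then show ?thesis using assms by (auto intro!: open_vimage continuous_intros)
qed

lemma filtermap_swap_at_within_quadrant:
  "filtermap prod.swap (at p within quadrant) = at (prod.swap p) within quadrant"
proof -
  have "filtermap prod.swap (at p within quadrant) = at (prod.swap p) within prod.swap ` quadrant"
    by (rule filtermap_linear_at_within) (auto simp: open_image_swap intro!: continuous_intros)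
  then show ?thesis by (simp add: quadrant_def product_swap)
qed

lemma lsc_on_set_quadrant_swap:
  assumes "lsc_on_set quadrant g"
  shows "lsc_on_set quadrant (g \<circ> prod.swap)"
  unfolding lsc_on_set_def
proof
  fix p assume "p \<in> quadrant"
  then have "g (prod.swap p) \<le> Liminf (at (prod.swap p) within quadrant) g"
    using assms by (cases p) (auto simp: lsc_on_set_def quadrant_def)
  also have "\<dots> = Liminf (at p within quadrant) (g \<circ> prod.swap)"
    by (simp add: filtermap_swap_at_within_quadrant[symmetric] Liminf_filtermap_eq comp_def)
  finally show "(g \<circ> prod.swap) p \<le> Liminf (at p within quadrant) (g \<circ> prod.swap)" by simp
qed

lemma lsc_envelope_quadrant_swap:
  assumes sym: "\<And>q. f (prod.swap q) = f q"
  shows "lsc_envelope quadrant f (prod.swap p) = lsc_envelope quadrant f p"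
proof -
  have le: "lsc_envelope quadrant f p \<le> lsc_envelope quadrant f (prod.swap p)" for p
    unfolding lsc_envelope_def
  proof (rule SUP_least)
    fix g assume "g \<in> {g. lsc_on_set quadrant g \<and> (\<forall>q\<in>quadrant. g q \<le> f q)}"
    then have "g \<circ> prod.swap \<in> {g. lsc_on_set quadrant g \<and> (\<forall>q\<in>quadrant. g q \<le> f q)}"
      using sym lsc_on_set_quadrant_swap by (fastforce simp: quadrant_def)
    then show "g p \<le> (SUP g\<in>{g. lsc_on_set quadrant g \<and> (\<forall>q\<in>quadrant. g q \<le> f q)}. g (prod.swap p))"
      by (metis (mono_tags, lifting) SUP_upper comp_apply swap_swap)
  qed
  show ?thesis using le[of p] le[of "prod.swap p"] by simp
qed

lemma margpersp_nonneg:
  assumes G: "Gamma0 F" and c: "0 \<le> c" and r: "0 \<le> r1" "0 \<le> r2"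
  shows "0 \<le> margpersp F c r1 r2"
proof (cases "c = \<infinity>")
  case True
  then show ?thesis using Gamma0_nonneg[OF G, of 0] r by (simp add: margpersp_def)
next
  case False
  have "ereal 0 \<le> lsc_envelope quadrant (\<lambda>(a, b). Htilde F (real_of_ereal c) a b) (r1, r2)"
    using Htilde_nonneg[OF G _ _ real_of_ereal_pos[OF c]]
    by (intro lsc_envelope_ge_continuous_minorant[where L = "\<lambda>_. 0"])
       (auto simp: quadrant_def zero_ereal_def[symmetric])
  then show ?thesis using False by (simp add: margpersp_def zero_ereal_def)
qed

lemma margpersp_commute: "margpersp F c r1 r2 = margpersp F c r2 r1"
  using lsc_envelope_quadrant_swap[of "\<lambda>(a, b). Htilde F (real_of_ereal c) a b" "(r1, r2)"]
  by (auto simp: margpersp_def Htilde_commute add.commute)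

lemma ereal_pos_obtain_real_below:
  fixes x :: ereal
  assumes "0 < x"
  obtains k where "0 < k" "ereal k \<le> x"
proof -
  obtain k where "0 < ereal k" "ereal k < x" using ereal_dense2[OF assms] by blast
  then show thesis by (intro that[of k]) auto
qed

text \<open>On the diagonal the transport term \<open>M c\<close> takes over from the first affine minorant,
  which is why \<open>0 < c\<close> may replace \<open>r1 < M\<close>.\<close>
lemma margpersp_pos:
  assumes G: "Gamma0 F" and strict: "\<And>s. 0 \<le> s \<Longrightarrow> s \<noteq> 1 \<Longrightarrow> 0 < F s"
    and c: "0 \<le> c" and r: "0 \<le> r1" "r1 \<le> r2" and M: "0 < M" "M < r2" "0 < c \<or> r1 < M"
  shows "0 < margpersp F (ereal c) r1 r2"
proof -
  define s1 where "s1 = (if r1 < M then 2 * M / (r1 + M) else 2)"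
  define s2 where "s2 = 2 * M / (r2 + M)"
  have s1: "1 < s1" "r1 < M \<Longrightarrow> s1 * r1 < M"
    using r M by (auto simp: s1_def field_simps)
  have s2: "0 \<le> s2" "s2 < 1" "M < s2 * r2"
    using r M by (auto simp: s2_def field_simps)
  obtain k1 where k1: "0 < k1" "ereal k1 \<le> F s1"
    using ereal_pos_obtain_real_below strict[of s1] s1 by force
  obtain k2 where k2: "0 < k2" "ereal k2 \<le> F s2"
    using ereal_pos_obtain_real_below strict[of s2] s2 by force
  define L where "L q = min (max (M * c) (k1 * (M - s1 * fst q) / (s1 - 1)))
                            (k2 * (M - s2 * snd q) / (s2 - 1))" for q :: "real \<times> real"
  have "continuous_on quadrant L"
    unfolding L_def using s1 s2 by (intro continuous_intros) auto
  moreover have "ereal (L q) \<le> Htilde F c (fst q) (snd q)" if "q \<in> quadrant" for q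
    unfolding L_def using that Htilde_lower_bound[OF G s1(1) s2(1,2) k1 k2 _ _ c]
    by (simp add: quadrant_def mem_Times_iff)
  ultimately have L_le: "ereal (L (r1, r2)) \<le> margpersp F (ereal c) r1 r2"
    unfolding margpersp_def
    by (auto intro!: lsc_envelope_ge_continuous_minorant simp: case_prod_beta)
  have "0 < M * c \<or> 0 < k1 * (M - s1 * r1) / (s1 - 1)"
    using M k1 s1 by (auto intro!: divide_pos_pos mult_pos_pos)
  moreover have "0 < k2 * (M - s2 * r2) / (s2 - 1)"
    using k2 s2 by (intro divide_neg_neg mult_pos_neg) auto
  ultimately have "0 < L (r1, r2)" by (auto simp: L_def less_max_iff_disj)
  with L_le show ?thesis by (meson ereal_less(2) less_le_trans)
qed

lemma margpersp_eq_0_iff: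
  assumes G: "Gamma0 F" and strict: "\<And>s. 0 \<le> s \<Longrightarrow> s \<noteq> 1 \<Longrightarrow> 0 < F s"
    and c: "0 \<le> c" and r: "0 \<le> r1" "0 \<le> r2"
  shows "margpersp F c r1 r2 = 0 \<longleftrightarrow> (r1 = 0 \<and> r2 = 0) \<or> (r1 = r2 \<and> c = 0)"
proof (cases c)
  case PInf
  have "0 < F 0" using strict[of 0] by simp
  then show ?thesis using PInf r by (cases "F 0") (auto simp: margpersp_def)
next
  case MInf
  then show ?thesis using c by simp
next
  case (real c0)
  have c0: "0 \<le> c0" using c real by simp
  have pos: "0 < margpersp F c a b"
    if ab: "0 \<le> a" "a \<le> b" and nonzero: "\<not> ((a = 0 \<and> b = 0) \<or> (a = b \<and> c0 = 0))" for a b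
  proof (cases "a < b")
    case True
    then show ?thesis
      using margpersp_pos[OF G strict c0 ab, of "(a + b) / 2"] ab real by simp
  next
    case False
    then show ?thesis
      using margpersp_pos[OF G strict c0 ab, of "b / 2"] ab nonzero c0 real by simp
  qed
  show ?thesis
  proof
    assume "margpersp F c r1 r2 = 0"
    then show "(r1 = 0 \<and> r2 = 0) \<or> (r1 = r2 \<and> c = 0)"
      using pos[of r1 r2] pos[of r2 r1] r margpersp_commute[of F c r1 r2] real
      by (cases "r1 \<le> r2") (auto simp: zero_ereal_def)
  next
    assume zero: "(r1 = 0 \<and> r2 = 0) \<or> (r1 = r2 \<and> c = 0)"
    have "margpersp F c r1 r1 \<le> ereal (r1 * c0)"
      using Htilde_diagonal_le[OF G] r real
      by (auto simp: margpersp_def intro!: lsc_envelope_quadrant_diagonal_le)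
    then show "margpersp F c r1 r2 = 0"
      using zero margpersp_nonneg[OF G c r] real by (auto simp: zero_ereal_def)
  qed
qed

theorem mainTheorem13:
  fixes F :: "real \<Rightarrow> ereal" and X :: "'a set" and c :: "'a \<Rightarrow> 'a \<Rightarrow> ereal"
  assumes F: "Gamma0 F"
    and strict: "\<And>s. s \<ge> 0 \<Longrightarrow> s \<noteq> 1 \<Longrightarrow> F s > 0"
    and c_nonneg: "\<And>x1 x2. x1 \<in> X \<Longrightarrow> x2 \<in> X \<Longrightarrow> c x1 x2 \<ge> 0"
    and c_sym: "\<And>x1 x2. x1 \<in> X \<Longrightarrow> x2 \<in> X \<Longrightarrow> c x1 x2 = c x2 x1"
    and c_zero: "\<And>x1 x2. x1 \<in> X \<Longrightarrow> x2 \<in> X \<Longrightarrow> (c x1 x2 = 0 \<longleftrightarrow> x1 = x2)"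
  shows "\<forall>x1\<in>X. \<forall>x2\<in>X. \<forall>r1\<ge>0. \<forall>r2\<ge>0.
           mpcost F c x1 r1 x2 r2 \<ge> 0
         \<and> mpcost F c x1 r1 x2 r2 = mpcost F c x2 r2 x1 r1
         \<and> (mpcost F c x1 r1 x2 r2 = 0 \<longleftrightarrow>
              (r1 = 0 \<and> r2 = 0) \<or> (r1 = r2 \<and> x1 = x2))"
proof (intro ballI allI impI conjI)
  fix x1 x2 r1 r2 assume x: "x1 \<in> X" "x2 \<in> X" and r: "0 \<le> (r1::real)" "0 \<le> (r2::real)"
  show "0 \<le> mpcost F c x1 r1 x2 r2"
    using margpersp_nonneg[OF F c_nonneg[OF x] r] by (simp add: mpcost_def)
  show "mpcost F c x1 r1 x2 r2 = mpcost F c x2 r2 x1 r1"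
    using margpersp_commute c_sym[OF x] by (simp add: mpcost_def)
  show "mpcost F c x1 r1 x2 r2 = 0 \<longleftrightarrow> (r1 = 0 \<and> r2 = 0) \<or> (r1 = r2 \<and> x1 = x2)"
    using margpersp_eq_0_iff[OF F strict c_nonneg[OF x] r] c_zero[OF x] by (simp add: mpcost_def)
qed

end
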